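(* Let $\epsilon,\mu>0$ be constants, $0<k_{min}<k_{max}$, $K:=(k_{min},k_{max})$, and for $k\in K$ let $\omega:=k/\sqrt{\epsilon\mu}$. For a source $\mathbf{J}\in(L^\infty(\mathbb{R}^3))^3$ with compact support let $$\mathbf{E}^\infty(\hat{\mathbf{x}},k;\mathbf{J})=i\omega\mu(\mathbb{I}-\hat{\mathbf{x}}\hat{\mathbf{x}}^{\rm T})\int_{\mathbb{R}^3}e^{-ik\hat{\mathbf{x}}\cdot\mathbf{y}}\mathbf{J}(\mathbf{y})\,d\mathbf{y}$$ be the electric far field pattern of the radiating solution of $\mathrm{curl}\,\mathrm{curl}\,\mathbf{E}-k^2\mathbf{E}=i\omega\mu\mathbf{J}$. Fix a point $\mathbf{z}_0\in\mathbb{R}^3$ and, for $\tau\in\mathbb{C}$ and $\mathbf{p}\in\mathbb{S}^2$, set $$\mathbf{E}^\infty_{\mathbf{z}_0}(\hat{\mathbf{x}},k;\mathbf{J},\tau,\mathbf{p}):=\mathbf{E}^\infty(\hat{\mathbf{x}},k;\mathbf{J})+ik\tau e^{-ik\hat{\mathbf{x}}\cdot\mathbf{z}_0}\,\hat{\mathbf{x}}\times\mathbf{p}$$ (the far field of the source $\mathbf{J}$ plus a magnetic dipole at $\mathbf{z}_0$ with strength $\tau$ and polarization $\mathbf{p}$). Let $\mathcal{T}=\{\tau_1,\tau_2,\tau_3\}\subset\mathbb{C}$ consist of three distinct numbers such that $\tau_2-\tau_1$ and $\tau_3-\tau_1$ are linearly independent (over $\mathbb{R}$). Fix $\hat{\mathbf{x}}_0\in\mathbb{S}^2$,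 choose $\mathbf{q}_0\in\mathbb{S}^2$ with $\hat{\mathbf{x}}_0\times\mathbf{q}_0\neq0$, and set $\mathbf{l}:=\hat{\mathbf{x}}_0\times\mathbf{q}_0/|\hat{\mathbf{x}}_0\times\mathbf{q}_0|$, $\mathbf{m}:=\hat{\mathbf{x}}_0\times\mathbf{l}$. For a source $\mathbf{J}$ with support $D$, define $$S(\hat{\mathbf{x}}_0;\mathbf{J}):=\{\mathbf{y}\in\mathbb{R}^3:\ \inf_{\mathbf{z}\in D}\mathbf{z}\cdot\hat{\mathbf{x}}_0\le\mathbf{y}\cdot\hat{\mathbf{x}}_0\le\sup_{\mathbf{z}\in D}\mathbf{z}\cdot\hat{\mathbf{x}}_0\},$$ $\Pi_\alpha:=\{\mathbf{y}\in\mathbb{R}^3:\ \mathbf{y}\cdot\hat{\mathbf{x}}_0+\alpha=0\}$ and $\hat{J}_{\mathbf{m}}(\alpha):=\int_{\Pi_\alpha}\mathbf{m}\cdot\mathbf{J}(\mathbf{y})\,ds(\mathbf{y})$ for $\alpha\in\mathbb{R}$. If the set $$\{\alpha\in\mathbb{R}:\ \Pi_\alpha\subset S(\hat{\mathbf{x}}_0;\mathbf{J}),\ \hat{J}_{\mathbf{m}}(\alpha)=0\}$$ has Lebesgue measure zero, then the strip $S(\hat{\mathbf{x}}_0;\mathbf{J})$ is uniquely determined by the phaseless data $|\mathbf{m}\cdot\mathbf{E}^\infty_{\mathbf{z}_0}(\hat{\mathbf{x}}_0,k;\mathbf{J},\tau,\mathbf{l})|$ for all $k\in K$, $\tau\in\mathcal{T}$.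 That is: if $\mathbf{J}_1,\mathbf{J}_2$ are two such sources, each satisfying the measure-zero condition, and $|\mathbf{m}\cdot\mathbf{E}^\infty_{\mathbf{z}_0}(\hat{\mathbf{x}}_0,k;\mathbf{J}_1,\tau,\mathbf{l})|=|\mathbf{m}\cdot\mathbf{E}^\infty_{\mathbf{z}_0}(\hat{\mathbf{x}}_0,k;\mathbf{J}_2,\tau,\mathbf{l})|$ for all $k\in K$ and $\tau\in\mathcal{T}$, then $S(\hat{\mathbf{x}}_0;\mathbf{J}_1)=S(\hat{\mathbf{x}}_0;\mathbf{J}_2)$.
   Context: $\mathbb{I}$ is the $3\times3$ identity matrix, $\mathbb{S}^2$ the unit sphere; $D$ denotes the support of $\mathbf{J}$; $ds$ is surface measure on $\Pi_\alpha$. Complex numbers are identified with points of $\mathbb{R}^2$ for the linear independence condition on $\tau_2-\tau_1,\tau_3-\tau_1$. *)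

theory Defs
  imports "HOL-Analysis.Analysis" "HOL-Analysis.Cross3"
begin

text \<open>Bilinear dot product of a real vector with a complex vector (no conjugation).\<close>
definition cdot :: "real^3 \<Rightarrow> complex^3 \<Rightarrow> complex" where
  "cdot a v = (\<Sum>j\<in>UNIV. complex_of_real (a $ j) * v $ j)"

definition cvec :: "real^3 \<Rightarrow> complex^3" where
  "cvec a = (\<chi> j. complex_of_real (a $ j))"

definition far_field :: "real \<Rightarrow> real \<Rightarrow> real \<Rightarrow> real^3 \<Rightarrow> (real^3 \<Rightarrow> complex^3) \<Rightarrow> complex^3" where
  "far_field eps mu k xh J =
     (let \<omega> = k / sqrt (eps * mu);
          F = (LINT y|lborel. exp (- \<i> * complex_of_real (k * (xh \<bullet> y))) *s J y)
      in (\<i> * complex_of_real (\<omega> * mu)) *s (F - cdot xh F *s cvec xh))"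

definition far_field_dip ::
  "real \<Rightarrow> real \<Rightarrow> real^3 \<Rightarrow> real^3 \<Rightarrow> real \<Rightarrow> (real^3 \<Rightarrow> complex^3) \<Rightarrow> complex \<Rightarrow> real^3 \<Rightarrow> complex^3" where
  "far_field_dip eps mu z0 xh k J \<tau> p =
     far_field eps mu k xh J
     + (\<i> * complex_of_real k * \<tau> * exp (- \<i> * complex_of_real (k * (xh \<bullet> z0)))) *s cvec (cross3 xh p)"

text \<open>Support of an L^infinity function (essential support; independent of the representative).\<close>
definition esssupp :: "(real^3 \<Rightarrow> complex^3) \<Rightarrow> (real^3) set" where
  "esssupp J = {x. \<forall>e>0. emeasure lborel {y \<in> ball x e. J y \<noteq> 0} \<noteq> 0}"

text \<open>Admissible sources: (a Borel representative of) an element of (L^infinity(R^3))^3 with compact support.\<close>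
definition source :: "(real^3 \<Rightarrow> complex^3) \<Rightarrow> bool" where
  "source J \<longleftrightarrow> J \<in> borel_measurable lborel \<and> (\<exists>C. AE y in lborel. norm (J y) \<le> C)
      \<and> compact (esssupp J)"

text \<open>The strip S(xh;J), with inf/sup taken in the extended reals (empty if the support is empty).\<close>
definition strip :: "real^3 \<Rightarrow> (real^3 \<Rightarrow> complex^3) \<Rightarrow> (real^3) set" where
  "strip xh J = {y. (INF z\<in>esssupp J. ereal (z \<bullet> xh)) \<le> ereal (y \<bullet> xh)
                   \<and> ereal (y \<bullet> xh) \<le> (SUP z\<in>esssupp J. ereal (z \<bullet> xh))}"

definition plane :: "real^3 \<Rightarrow> real \<Rightarrow> (real^3) set" where
  "plane xh \<alpha> = {y. y \<bullet> xh + \<alpha> = 0}"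

text \<open>Plane integral int_{Pi_alpha} m . J ds, with Pi_alpha parametrized isometrically by
  (s,t) |-> -alpha xh + s l + t m, where (xh,l,m) is an orthonormal frame.\<close>
definition Jhat :: "real^3 \<Rightarrow> real^3 \<Rightarrow> real^3 \<Rightarrow> (real^3 \<Rightarrow> complex^3) \<Rightarrow> real \<Rightarrow> complex" where
  "Jhat xh l m J \<alpha> =
     (LINT st|(lborel :: (real \<times> real) measure).
        cdot m (J ((- \<alpha>) *\<^sub>R xh + fst st *\<^sub>R l + snd st *\<^sub>R m)))"

end

theory Submission
  imports Defs "HOL-Probability.Probability" "HOL-Complex_Analysis.Complex_Analysis"
begin

text \<open>
  Along \<open>m\<close>, the far field in direction \<open>x0\<close> at wave number \<open>k\<close> is \<open>\<i> \<omega> \<mu>\<close> times the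
  Fourier transform at \<open>k\<close> of the plane integrals \<open>Jhat\<close>, and the dipole adds \<open>\<tau> B(k)\<close> with
  \<open>B(k) \<noteq> 0\<close>. Because \<open>\<tau>2 - \<tau>1\<close> and \<open>\<tau>3 - \<tau>1\<close> are linearly independent over the reals,
  the three moduli determine this Fourier transform, so those of \<open>Jhat\<close> for \<open>J1\<close> and \<open>J2\<close>
  agree on \<open>(kmin, kmax)\<close>. Plane integrals of a compactly supported source are compactly
  supported, so their Fourier transforms are entire and agree everywhere; Fourier uniqueness
  (via Levy's uniqueness theorem for characteristic functions) then gives \<open>Jhat\<close> for \<open>J1\<close> and
  \<open>J2\<close> equal almost everywhere. The offsets \<open>\<alpha>\<close> of the planes inside the strip form a closed
  interval, outside of which \<open>Jhat\<close> vanishes almost everywhere and inside of which, by the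
  measure-zero hypothesis, it vanishes only on a null set. Hence the two intervals, and with
  them the strips, coincide.
\<close>

section \<open>Phase retrieval from three reference values\<close>

lemma complex_eq_zero_if_Re_mult_eq_zero:
  fixes z d2 d3 :: complex
  assumes indep: "\<forall>a b::real. a *\<^sub>R d2 + b *\<^sub>R d3 = 0 \<longrightarrow> a = 0 \<and> b = 0"
    and "Re (z * d2) = 0" and "Re (z * d3) = 0"
  shows "z = 0"
proof (rule ccontr)
  assume "z \<noteq> 0"
  define s t where "s = Im (z * d2)" and "t = Im (z * d3)"
  have zs: "z * d2 = \<i> * of_real s" and zt: "z * d3 = \<i> * of_real t"
    using assms(2,3) by (simp_all add: s_def t_def complex_eq_iff)
  have "z * (t *\<^sub>R d2 + (- s) *\<^sub>R d3) = of_real t * (z * d2) - of_real s * (z * d3)"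
    by (simp add: scaleR_conv_of_real algebra_simps)
  also have "\<dots> = 0" by (simp add: zs zt)
  finally have "t *\<^sub>R d2 + (- s) *\<^sub>R d3 = 0"
    using \<open>z \<noteq> 0\<close> by simp
  then have "t = 0 \<and> - s = 0"
    by (rule indep[rule_format])
  moreover have "d2 \<noteq> 0"
    using indep[rule_format, of 1 0] by auto
  ultimately show False
    using zs \<open>z \<noteq> 0\<close> by simp
qed

text \<open>Since \<open>|A + \<tau> B|\<^sup>2 = |A|\<^sup>2 + 2 Re (cnj A B \<tau>) + |\<tau> B|\<^sup>2\<close>, equal moduli at \<open>\<tau>1, \<tau>2, \<tau>3\<close>
  make the real-linear functional \<open>\<tau> \<mapsto> Re (cnj (A1 - A2) B \<tau>)\<close> vanish on \<open>\<tau>2 - \<tau>1\<close> and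
  \<open>\<tau>3 - \<tau>1\<close>, which span \<open>\<complex>\<close> over the reals.\<close>
lemma eq_if_cmod_shifts_eq:
  fixes A1 A2 B \<tau>1 \<tau>2 \<tau>3 :: complex
  assumes "B \<noteq> 0"
    and indep: "\<forall>a b::real. a *\<^sub>R (\<tau>2 - \<tau>1) + b *\<^sub>R (\<tau>3 - \<tau>1) = 0 \<longrightarrow> a = 0 \<and> b = 0"
    and eq: "\<And>\<tau>. \<tau> \<in> {\<tau>1, \<tau>2, \<tau>3} \<Longrightarrow> cmod (A1 + \<tau> * B) = cmod (A2 + \<tau> * B)"
  shows "A1 = A2"
proof -
  define z where "z = cnj (A1 - A2) * B"
  have sq: "(cmod (A + \<tau> * B))\<^sup>2 = (cmod A)\<^sup>2 + 2 * Re (cnj A * B * \<tau>) + (cmod (\<tau> * B))\<^sup>2"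
    for A \<tau>
    by (simp only: cmod_power2) (simp add: algebra_simps power2_eq_square)
  have lin: "(cmod A1)\<^sup>2 - (cmod A2)\<^sup>2 + 2 * Re (z * \<tau>) = 0" if "\<tau> \<in> {\<tau>1, \<tau>2, \<tau>3}" for \<tau>
    using arg_cong[OF eq[OF that], of "\<lambda>r. r\<^sup>2"] sq[of A1 \<tau>] sq[of A2 \<tau>]
    by (simp add: z_def algebra_simps)
  have "Re (z * (\<tau>2 - \<tau>1)) = 0" "Re (z * (\<tau>3 - \<tau>1)) = 0"
    using lin[of \<tau>1] lin[of \<tau>2] lin[of \<tau>3] by (simp_all add: algebra_simps)
  then have "z = 0"
    by (rule complex_eq_zero_if_Re_mult_eq_zero[OF indep])
  then show ?thesis
    using \<open>B \<noteq> 0\<close> by (simp add: z_def)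
qed

section \<open>Fourier transform on the real line\<close>

definition fourier_transform :: "(real \<Rightarrow> complex) \<Rightarrow> real \<Rightarrow> complex" where
  "fourier_transform w t = (CLINT x|lborel. iexp (t * x) * w x)"

lemma integrable_iexp_mult:
  fixes w :: "real \<Rightarrow> complex"
  assumes "integrable lborel w"
  shows "integrable lborel (\<lambda>x. iexp (t * x) * w x)"
proof (rule Bochner_Integration.integrable_bound[OF assms])
  show "(\<lambda>x. iexp (t * x) * w x) \<in> borel_measurable lborel"
    using assms by measurable
qed (simp add: norm_mult)

lemma fourier_transform_diff:
  assumes "integrable lborel v" "integrable lborel w"
  shows "fourier_transform (\<lambda>x. v x - w x) t = fourier_transform v t - fourier_transform w t"
  unfolding fourier_transform_def
  using Bochner_Integration.integral_diff[OF integrable_iexp_mult[OF assms(1)] integrable_iexp_mult[OF assms(2)]]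
  by (simp add: right_diff_distrib)

lemma fourier_transform_cmult: "fourier_transform (\<lambda>x. c * w x) t = c * fourier_transform w t"
proof -
  have "fourier_transform (\<lambda>x. c * w x) t = (CLINT x|lborel. c * (iexp (t * x) * w x))"
    unfolding fourier_transform_def by (simp only: mult.left_commute)
  then show ?thesis
    unfolding fourier_transform_def by (simp only: integral_mult_right_zero)
qed

lemma fourier_transform_Re:
  assumes w: "integrable lborel w"
  shows "fourier_transform (\<lambda>x. of_real (Re (w x))) t
    = (fourier_transform w t + cnj (fourier_transform w (- t))) / 2"
proof -
  have pointwise: "iexp (t * x) * of_real (Re (w x))
      = (iexp (t * x) * w x + cnj (iexp ((- t) * x) * w x)) / 2" for x
    by (simp add: exp_cnj distrib_left[symmetric] complex_add_cnj)
  have "fourier_transform (\<lambda>x. of_real (Re (w x))) t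
      = (CLINT x|lborel. (iexp (t * x) * w x + cnj (iexp ((- t) * x) * w x)) / 2)"
    unfolding fourier_transform_def by (simp only: pointwise)
  also have "\<dots> = (fourier_transform w t + (CLINT x|lborel. cnj (iexp ((- t) * x) * w x))) / 2"
    unfolding fourier_transform_def
    by (simp only: integral_divide_zero Bochner_Integration.integral_add
        integrable_iexp_mult[OF w] integrable_cnj)
  also have "\<dots> = (fourier_transform w t + cnj (fourier_transform w (- t))) / 2"
    unfolding fourier_transform_def by (simp only: Bochner_Integration.integral_cnj)
  finally show ?thesis .
qed

lemma real_distribution_normalized_density:
  fixes f :: "real \<Rightarrow> real"
  assumes f: "integrable lborel f" "\<And>x. 0 \<le> f x" and "0 < c" "integral\<^sup>L lborel f = c"
  shows "real_distribution (density lborel (\<lambda>x. ennreal (f x / c)))"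
proof -
  have [measurable]: "f \<in> borel_measurable lborel"
    using f by auto
  have "emeasure (density lborel (\<lambda>x. ennreal (f x / c))) UNIV = (\<integral>\<^sup>+x. ennreal (f x / c) \<partial>lborel)"
    by (simp add: emeasure_density)
  also have "\<dots> = ennreal (LINT x|lborel. f x / c)"
    by (rule nn_integral_eq_integral) (use f \<open>0 < c\<close> in auto)
  also have "\<dots> = 1"
    using assms by simp
  finally have "prob_space (density lborel (\<lambda>x. ennreal (f x / c)))"
    by (intro prob_spaceI) simp
  then show ?thesis
    by (simp add: real_distribution_def real_distribution_axioms_def)
qed

lemma char_normalized_density:
  fixes f :: "real \<Rightarrow> real"
  assumes f: "integrable lborel f" "\<And>x. 0 \<le> f x" and "0 < c"
  shows "char (density lborel (\<lambda>x. ennreal (f x / c))) t = fourier_transform (\<lambda>x. of_real (f x)) t / c"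
proof -
  have [measurable]: "f \<in> borel_measurable lborel"
    using f by auto
  have "char (density lborel (\<lambda>x. ennreal (f x / c))) t = (CLINT x|lborel. (f x / c) *\<^sub>R iexp (t * x))"
    unfolding char_def using f \<open>0 < c\<close> by (intro integral_density) auto
  also have "\<dots> = (CLINT x|lborel. iexp (t * x) * of_real (f x) / c)"
    by (intro Bochner_Integration.integral_cong) (auto simp: scaleR_conv_of_real)
  also have "\<dots> = fourier_transform (\<lambda>x. of_real (f x)) t / c"
    unfolding fourier_transform_def by (rule integral_divide_zero)
  finally show ?thesis .
qed

text \<open>After normalization \<open>p\<close> and \<open>q\<close> are probability densities with the same characteristic
  function, so Levy's uniqueness theorem applies.\<close>
lemma AE_eq_if_fourier_transform_eq_nonneg:
  fixes p q :: "real \<Rightarrow> real"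
  assumes ip: "integrable lborel p" and p0: "\<And>x. 0 \<le> p x"
    and iq: "integrable lborel q" and q0: "\<And>x. 0 \<le> q x"
    and F: "\<And>t. fourier_transform (\<lambda>x. of_real (p x)) t = fourier_transform (\<lambda>x. of_real (q x)) t"
  shows "AE x in lborel. p x = q x"
proof -
  define c where "c = integral\<^sup>L lborel p"
  have cq: "integral\<^sup>L lborel q = c"
    using F[of 0] by (simp add: fourier_transform_def c_def)
  have "0 \<le> c"
    unfolding c_def using p0 by (simp add: integral_nonneg_AE)
  then consider "c = 0" | "0 < c"
    by linarith
  then show ?thesis
  proof cases
    case 1
    have "AE x in lborel. p x = 0"
      using integral_nonneg_eq_0_iff_AE[OF ip] p0 1 by (simp add: c_def)
    moreover have "AE x in lborel. q x = 0"
      using integral_nonneg_eq_0_iff_AE[OF iq] q0 1 cq by simp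
    ultimately show ?thesis
      by eventually_elim simp
  next
    case 2
    define Mp Mq where "Mp = density lborel (\<lambda>x. ennreal (p x / c))"
      and "Mq = density lborel (\<lambda>x. ennreal (q x / c))"
    have "real_distribution Mp"
      unfolding Mp_def by (rule real_distribution_normalized_density[OF ip p0 2]) (simp add: c_def)
    moreover have "real_distribution Mq"
      unfolding Mq_def by (rule real_distribution_normalized_density[OF iq q0 2 cq])
    moreover have "char Mp = char Mq"
      unfolding Mp_def Mq_def
      by (rule ext) (simp only: char_normalized_density[OF ip p0 2] char_normalized_density[OF iq q0 2] F)
    ultimately have "Mp = Mq"
      by (rule Levy_uniqueness)
    then have "AE x in lborel. ennreal (p x / c) = ennreal (q x / c)"
      unfolding Mp_def Mq_def using ip iq
      by (intro sigma_finite_measure.density_unique[OF sigma_finite_lborel]) auto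
    then show ?thesis
      by eventually_elim (use 2 p0 q0 in simp)
  qed
qed

lemma fourier_transform_real_zero_imp_AE_zero:
  fixes a :: "real \<Rightarrow> real"
  assumes a: "integrable lborel a" and F: "\<And>t. fourier_transform (\<lambda>x. of_real (a x)) t = 0"
  shows "AE x in lborel. a x = 0"
proof -
  define p q where "p x = max (a x) 0" and "q x = max (- a x) 0" for x
  have ip: "integrable lborel p"
    unfolding p_def using a by auto
  have iq: "integrable lborel q"
    unfolding q_def using a by auto
  have apq: "a x = p x - q x" for x
    by (auto simp: p_def q_def)
  have Fpq: "fourier_transform (\<lambda>x. of_real (p x)) t = fourier_transform (\<lambda>x. of_real (q x)) t" for t
    using F[of t] fourier_transform_diff[of "\<lambda>x. of_real (p x)" "\<lambda>x. of_real (q x)" t] ip iq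
    by (simp add: apq)
  have "AE x in lborel. p x = q x"
    by (rule AE_eq_if_fourier_transform_eq_nonneg[OF ip _ iq _ Fpq]) (simp_all add: p_def q_def)
  then show ?thesis
    by eventually_elim (simp add: apq)
qed

lemma fourier_transform_zero_imp_AE_zero:
  fixes w :: "real \<Rightarrow> complex"
  assumes w: "integrable lborel w" and F: "\<And>t. fourier_transform w t = 0"
  shows "AE x in lborel. w x = 0"
proof -
  have Re_zero: "AE x in lborel. Re (v x) = 0"
    if v: "integrable lborel v" and "\<And>t. fourier_transform v t = 0" for v
    using v by (intro fourier_transform_real_zero_imp_AE_zero) (simp_all add: fourier_transform_Re that)
  have "AE x in lborel. Re (w x) = 0"
    using w F by (rule Re_zero)
  moreover have "AE x in lborel. Re (- \<i> * w x) = 0"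
  proof (rule Re_zero)
    show "integrable lborel (\<lambda>x. - \<i> * w x)"
      using w by simp
    show "fourier_transform (\<lambda>x. - \<i> * w x) t = 0" for t
      by (simp only: fourier_transform_cmult F mult_zero_right)
  qed
  ultimately show ?thesis
    by eventually_elim (simp add: complex_eq_iff)
qed

section \<open>Fourier transforms of compactly supported functions\<close>

lemma AE_norm_moment_le:
  fixes w :: "real \<Rightarrow> complex"
  assumes "AE x in lborel. R < \<bar>x\<bar> \<longrightarrow> w x = 0"
  shows "AE x in lborel. \<bar>x\<bar> ^ n * norm (w x) \<le> R ^ n * norm (w x)"
  using assms
proof eventually_elim
  case (elim x)
  show ?case
  proof (cases "\<bar>x\<bar> \<le> R")
    case True
    then show ?thesis
      by (intro mult_right_mono power_mono) auto
  qed (use elim in simp)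
qed

lemma integrable_moment:
  fixes w :: "real \<Rightarrow> complex"
  assumes w: "integrable lborel w" and supp: "AE x in lborel. R < \<bar>x\<bar> \<longrightarrow> w x = 0"
  shows "integrable lborel (\<lambda>x. of_real x ^ n * w x)"
proof (rule Bochner_Integration.integrable_bound)
  show "integrable lborel (\<lambda>x. R ^ n * norm (w x))"
    using w by simp
  show "(\<lambda>x. of_real x ^ n * w x) \<in> borel_measurable lborel"
    using w by measurable
  show "AE x in lborel. norm (of_real x ^ n * w x) \<le> norm (R ^ n * norm (w x))"
    using AE_norm_moment_le[OF supp, of n]
    by eventually_elim (auto simp: norm_mult norm_power)
qed

lemma integral_norm_moment_le:
  fixes w :: "real \<Rightarrow> complex"
  assumes w: "integrable lborel w" and supp: "AE x in lborel. R < \<bar>x\<bar> \<longrightarrow> w x = 0"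
  shows "(\<integral>x. \<bar>x\<bar> ^ n * norm (w x) \<partial>lborel) \<le> R ^ n * (\<integral>x. norm (w x) \<partial>lborel)"
proof -
  have "integrable lborel (\<lambda>x. \<bar>x\<bar> ^ n * norm (w x))"
    using integrable_norm[OF integrable_moment[OF w supp, of n]] by (simp add: norm_mult norm_power)
  then have "(\<integral>x. \<bar>x\<bar> ^ n * norm (w x) \<partial>lborel) \<le> (\<integral>x. R ^ n * norm (w x) \<partial>lborel)"
    using w AE_norm_moment_le[OF supp] by (intro integral_mono_AE) auto
  then show ?thesis
    by simp
qed

lemma summable_power_div_fact: "summable (\<lambda>n. (r::real) ^ n / fact n)"
  using summable_exp[of r] by (simp add: divide_inverse mult.commute)

definition fourier_taylor_coeff :: "(real \<Rightarrow> complex) \<Rightarrow> nat \<Rightarrow> complex" where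
  "fourier_taylor_coeff w n = \<i> ^ n / fact n * (CLINT x|lborel. of_real x ^ n * w x)"

lemma norm_fourier_taylor_coeff_le:
  fixes w :: "real \<Rightarrow> complex"
  assumes w: "integrable lborel w" and supp: "AE x in lborel. R < \<bar>x\<bar> \<longrightarrow> w x = 0"
  shows "norm (fourier_taylor_coeff w n) \<le> (\<integral>x. norm (w x) \<partial>lborel) * R ^ n / fact n"
proof -
  have "norm (CLINT x|lborel. of_real x ^ n * w x) \<le> (\<integral>x. \<bar>x\<bar> ^ n * norm (w x) \<partial>lborel)"
    using integral_norm_bound[of lborel "\<lambda>x. of_real x ^ n * w x"] by (simp add: norm_mult norm_power)
  also have "\<dots> \<le> (\<integral>x. norm (w x) \<partial>lborel) * R ^ n"
    using integral_norm_moment_le[OF w supp] by (simp add: mult.commute)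
  finally show ?thesis
    by (simp add: fourier_taylor_coeff_def norm_mult norm_divide norm_power divide_right_mono)
qed

text \<open>The moments of a compactly supported function grow at most geometrically, so its
  Fourier transform is given by an everywhere convergent power series.\<close>
lemma summable_fourier_taylor_series:
  fixes w :: "real \<Rightarrow> complex"
  assumes w: "integrable lborel w" and supp: "AE x in lborel. R < \<bar>x\<bar> \<longrightarrow> w x = 0"
  shows "summable (\<lambda>n. fourier_taylor_coeff w n * z ^ n)"
proof (rule summable_comparison_test'[OF summable_mult[OF summable_power_div_fact]])
  define L where "L = (\<integral>x. norm (w x) \<partial>lborel)"
  fix n
  have "norm (fourier_taylor_coeff w n * z ^ n) \<le> L * R ^ n / fact n * norm z ^ n"
    using mult_right_mono[OF norm_fourier_taylor_coeff_le[OF w supp], of "norm z ^ n"]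
    by (simp add: L_def norm_mult norm_power)
  also have "\<dots> = L * ((R * norm z) ^ n / fact n)"
    by (simp add: power_mult_distrib)
  finally show "norm (fourier_taylor_coeff w n * z ^ n) \<le> L * ((R * norm z) ^ n / fact n)" .
qed

lemma fourier_transform_eq_taylor_series:
  fixes w :: "real \<Rightarrow> complex"
  assumes w: "integrable lborel w" and supp: "AE x in lborel. R < \<bar>x\<bar> \<longrightarrow> w x = 0"
  shows "fourier_transform w s = (\<Sum>n. fourier_taylor_coeff w n * of_real s ^ n)"
proof -
  define g where "g n x = (\<i> * of_real s) ^ n / fact n * (of_real x ^ n * w x)" for n x
  have g_eq: "g n x = (\<i> * of_real (s * x)) ^ n /\<^sub>R fact n * w x" for n x
    by (simp add: g_def scaleR_conv_of_real power_mult_distrib divide_inverse ac_simps)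
  have g_norm: "norm (g n x) = norm (w x) * (\<bar>s * x\<bar> ^ n / fact n)" for n x
    by (simp add: g_def norm_mult norm_power norm_divide abs_mult power_mult_distrib)
  have g_norm_bound:
    "(\<integral>x. norm (g n x) \<partial>lborel) \<le> (\<integral>x. norm (w x) \<partial>lborel) * ((R * \<bar>s\<bar>) ^ n / fact n)" for n
  proof -
    have "(\<integral>x. norm (g n x) \<partial>lborel) = \<bar>s\<bar> ^ n / fact n * (\<integral>x. \<bar>x\<bar> ^ n * norm (w x) \<partial>lborel)"
      by (simp add: g_def norm_mult norm_power norm_divide)
    also have "\<dots> \<le> \<bar>s\<bar> ^ n / fact n * (R ^ n * (\<integral>x. norm (w x) \<partial>lborel))"
      by (intro mult_left_mono integral_norm_moment_le[OF w supp]) auto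
    finally show ?thesis
      by (simp add: power_mult_distrib mult_ac)
  qed
  have "fourier_transform w s = (\<integral>x. (\<Sum>n. g n x) \<partial>lborel)"
    unfolding fourier_transform_def g_eq
    by (rule Bochner_Integration.integral_cong[OF refl sums_unique[OF sums_mult2[OF exp_converges]]])
  also have "\<dots> = (\<Sum>n. integral\<^sup>L lborel (g n))"
  proof (rule integral_suminf)
    show "integrable lborel (g n)" for n
      unfolding g_def using integrable_moment[OF w supp] by simp
    show "AE x in lborel. summable (\<lambda>n. norm (g n x))"
      unfolding g_norm by (intro AE_I2 summable_mult summable_power_div_fact)
    show "summable (\<lambda>n. \<integral>x. norm (g n x) \<partial>lborel)"
      using g_norm_bound
      by (intro summable_comparison_test'[OF summable_mult[OF summable_power_div_fact]]) simp
  qed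
  also have "\<dots> = (\<Sum>n. fourier_taylor_coeff w n * of_real s ^ n)"
    unfolding g_def[abs_def] fourier_taylor_coeff_def integral_mult_right_zero
    by (simp add: power_mult_distrib mult_ac)
  finally show ?thesis .
qed

lemma fourier_transform_entire_extension:
  fixes w :: "real \<Rightarrow> complex"
  assumes w: "integrable lborel w" and supp: "AE x in lborel. R < \<bar>x\<bar> \<longrightarrow> w x = 0"
  obtains f where "f holomorphic_on UNIV" and "\<And>s. fourier_transform w s = f (of_real s)"
proof
  let ?c = "fourier_taylor_coeff w"
  have "((\<lambda>z. \<Sum>n. ?c n * z ^ n) has_field_derivative (\<Sum>n. diffs ?c n * z ^ n)) (at z)" for z
    by (rule termdiffs_strong_converges_everywhere[OF summable_fourier_taylor_series[OF w supp]])
  then show "(\<lambda>z. \<Sum>n. ?c n * z ^ n) holomorphic_on UNIV"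
    by (auto simp: holomorphic_on_def field_differentiable_def intro: has_field_derivative_at_within)
  show "fourier_transform w s = (\<Sum>n. ?c n * of_real s ^ n)" for s
    by (rule fourier_transform_eq_taylor_series[OF w supp])
qed

lemma fourier_transform_eq_zero_if_zero_on_interval:
  fixes w :: "real \<Rightarrow> complex"
  assumes w: "integrable lborel w" and supp: "AE x in lborel. x \<notin> B \<longrightarrow> w x = 0"
    and "bounded B" and "a < b"
    and F: "\<And>k. a < k \<Longrightarrow> k < b \<Longrightarrow> fourier_transform w k = 0"
  shows "fourier_transform w t = 0"
proof -
  obtain R where R: "\<And>x. x \<in> B \<Longrightarrow> norm x \<le> R"
    using \<open>bounded B\<close> by (auto simp: bounded_iff)
  have "AE x in lborel. R < \<bar>x\<bar> \<longrightarrow> w x = 0"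
    using supp by eventually_elim (metis R not_le real_norm_def)
  then obtain f where f: "f holomorphic_on UNIV" "\<And>s. fourier_transform w s = f (of_real s)"
    using fourier_transform_entire_extension[OF w] by blast
  have limpt: "of_real a islimpt (of_real ` {a<..<b} :: complex set)"
    using \<open>a < b\<close>
    by (intro islimpt_isCont_image islimpt_greaterThanLessThan1) (auto simp: eventually_at_filter)
  have "f (of_real t) = 0"
    by (rule analytic_continuation[OF f(1) open_UNIV connected_UNIV subset_UNIV UNIV_I limpt])
      (use F in \<open>auto simp: f(2)[symmetric]\<close>)
  then show ?thesis
    by (simp add: f(2))
qed

section \<open>Coordinates adapted to an orthonormal frame\<close>

definition orthonormal_frame :: "real^3 \<Rightarrow> real^3 \<Rightarrow> real^3 \<Rightarrow> bool" where
  "orthonormal_frame u v w \<longleftrightarrow>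
     u \<bullet> u = 1 \<and> v \<bullet> v = 1 \<and> w \<bullet> w = 1 \<and> u \<bullet> v = 0 \<and> u \<bullet> w = 0 \<and> v \<bullet> w = 0"

text \<open>\<open>frame_map u v w (\<alpha>, s, t)\<close> is the point with coordinates \<open>(s, t)\<close> on the plane
  \<open>y \<bullet> u + \<alpha> = 0\<close>, parametrized as in the definition of \<open>Jhat\<close>.\<close>
definition frame_map :: "real^3 \<Rightarrow> real^3 \<Rightarrow> real^3 \<Rightarrow> real \<times> real \<times> real \<Rightarrow> real^3" where
  "frame_map u v w p = (- fst p) *\<^sub>R u + fst (snd p) *\<^sub>R v + snd (snd p) *\<^sub>R w"

lemma frame_map_measurable [measurable]: "frame_map u v w \<in> borel_measurable borel"
  unfolding frame_map_def by (intro borel_measurable_continuous_onI continuous_intros)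

lemma orthonormal_frameD:
  assumes "orthonormal_frame u v w"
  shows "u \<bullet> u = 1" "v \<bullet> v = 1" "w \<bullet> w = 1" "u \<bullet> v = 0" "u \<bullet> w = 0" "v \<bullet> w = 0"
    "v \<bullet> u = 0" "w \<bullet> u = 0" "w \<bullet> v = 0"
  using assms by (auto simp: orthonormal_frame_def inner_commute)

lemma inner_frame_map:
  assumes "orthonormal_frame u v w"
  shows "frame_map u v w p \<bullet> u = - fst p"
  by (simp add: frame_map_def inner_add_left inner_diff_left orthonormal_frameD[OF assms])

lemma distr_lborel_orthogonal_transformation:
  fixes U :: "real^'n::{finite,wellorder} \<Rightarrow> real^'n::_"
  assumes U: "orthogonal_transformation U"
  shows "distr lborel borel U = lborel"
proof (rule lborel_eqI[symmetric])
  have U_measurable [measurable]: "U \<in> borel_measurable borel"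
    using orthogonal_transformation_linear[OF U]
    by (intro borel_measurable_continuous_onI linear_continuous_on) (simp add: linear_conv_bounded_linear[symmetric])
  fix l u :: "real^'n::_"
  assume "\<And>b. b \<in> Basis \<Longrightarrow> l \<bullet> b \<le> u \<bullet> b"
  then have "(\<Prod>b\<in>Basis. (u - l) \<bullet> b) = emeasure lborel (box l u)"
    by simp
  have V: "orthogonal_transformation (inv U)"
    by (rule orthogonal_transformation_inv[OF U])
  have "U -` box l u \<in> sets lborel"
    using measurable_sets_borel[OF U_measurable, of "box l u"] by simp
  then have "emeasure (distr lborel borel U) (box l u) = emeasure lebesgue (U -` box l u)"
    by (simp add: emeasure_distr)
  also have "\<dots> = emeasure lebesgue (inv U ` box l u)"
    by (simp add: bij_vimage_eq_inv_image[OF orthogonal_transformation_bij[OF U]])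
  also have "\<dots> = ennreal (measure lebesgue (box l u))"
    by (simp add: emeasure_eq_measure2 measurable_orthogonal_image[OF V lmeasurable_box]
        measure_orthogonal_image[OF V lmeasurable_box])
  also have "\<dots> = emeasure lborel (box l u)"
    by (simp add: emeasure_eq_measure2)
  finally show "emeasure (distr lborel borel U) (box l u) = (\<Prod>b\<in>Basis. (u - l) \<bullet> b)"
    using \<open>(\<Prod>b\<in>Basis. (u - l) \<bullet> b) = emeasure lborel (box l u)\<close> by simp
qed simp

definition vec_of_triple :: "real \<times> real \<times> real \<Rightarrow> real^3" where
  "vec_of_triple p = vector [fst p, fst (snd p), snd (snd p)]"

lemma vec_of_triple_measurable [measurable]: "vec_of_triple \<in> borel_measurable borel"
proof -
  have "linear vec_of_triple"
    by (intro linearI) (auto simp: vec_of_triple_def vec_eq_iff forall_3)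
  then show ?thesis
    by (intro borel_measurable_continuous_onI linear_continuous_on) (simp add: linear_conv_bounded_linear[symmetric])
qed

lemma distr_lborel_vec_of_triple: "distr lborel borel vec_of_triple = lborel"
proof (rule lborel_eqI[symmetric])
  fix l u :: "real^3"
  assume Basis_le: "\<And>b. b \<in> Basis \<Longrightarrow> l \<bullet> b \<le> u \<bullet> b"
  have lu: "l $ i \<le> u $ i" for i
    using Basis_le[of "axis i 1"] by (auto simp: Basis_vec_def inner_axis)
  have B23: "emeasure lborel ({l$2<..<u$2} \<times> {l$3<..<u$3})
      = emeasure lborel {l$2<..<u$2} * emeasure lborel {l$3<..<u$3}"
    by (simp only: lborel_prod[symmetric])
      (rule sigma_finite_measure.emeasure_pair_measure_Times[OF sigma_finite_lborel], auto)
  have "vec_of_triple -` box l u = {l$1<..<u$1} \<times> ({l$2<..<u$2} \<times> {l$3<..<u$3})"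
    by (auto simp: vec_of_triple_def mem_box_cart forall_3)
  then have "emeasure (distr lborel borel vec_of_triple) (box l u)
      = emeasure (lborel \<Otimes>\<^sub>M lborel) ({l$1<..<u$1} \<times> ({l$2<..<u$2} \<times> {l$3<..<u$3}))"
    by (simp add: emeasure_distr lborel_prod)
  also have "\<dots> = emeasure lborel {l$1<..<u$1} * emeasure lborel ({l$2<..<u$2} \<times> {l$3<..<u$3})"
    by (rule sigma_finite_measure.emeasure_pair_measure_Times[OF sigma_finite_lborel])
      (simp_all add: borel_open open_Times)
  also have "\<dots> = ennreal (u$1 - l$1) * (ennreal (u$2 - l$2) * ennreal (u$3 - l$3))"
    using lu by (simp add: B23)
  also have "\<dots> = ennreal ((u$1 - l$1) * ((u$2 - l$2) * (u$3 - l$3)))"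
    using lu by (simp add: ennreal_mult)
  also have "\<dots> = (\<Prod>b\<in>Basis. (u - l) \<bullet> b)"
  proof -
    have Basis3: "(Basis :: (real^3) set) = {axis 1 1, axis 2 1, axis 3 1}"
      by (auto simp: Basis_vec_def UNIV_3)
    show ?thesis
      by (simp add: Basis3 axis_eq_axis inner_axis mult.assoc)
  qed
  finally show "emeasure (distr lborel borel vec_of_triple) (box l u) = (\<Prod>b\<in>Basis. (u - l) \<bullet> b)" .
qed simp

lemma distr_lborel_frame_map:
  assumes "orthonormal_frame u v w"
  shows "distr lborel borel (frame_map u v w) = lborel"
proof -
  define U where "U x = (- (x$1)) *\<^sub>R u + (x$2) *\<^sub>R v + (x$3) *\<^sub>R w" for x :: "real^3"
  have "orthogonal_transformation U"
    unfolding orthogonal_transformation_def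
  proof
    show "linear U"
      by (intro linearI) (simp_all add: U_def algebra_simps)
    show "\<forall>x y. U x \<bullet> U y = x \<bullet> y"
    proof (intro allI)
      fix x y :: "real^3"
      have "x \<bullet> y = x$1 * y$1 + x$2 * y$2 + x$3 * y$3"
        by (simp add: inner_vec_def sum_3)
      then show "U x \<bullet> U y = x \<bullet> y"
        by (simp add: U_def inner_add_left inner_add_right orthonormal_frameD[OF assms] algebra_simps)
    qed
  qed
  then have [measurable]: "U \<in> borel_measurable borel"
    using orthogonal_transformation_linear
    by (intro borel_measurable_continuous_onI linear_continuous_on) (simp add: linear_conv_bounded_linear[symmetric])
  have "frame_map u v w = U \<circ> vec_of_triple"
    by (auto simp: fun_eq_iff frame_map_def U_def vec_of_triple_def)
  then have "distr lborel borel (frame_map u v w) = distr (distr lborel borel vec_of_triple) borel U"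
    by (subst distr_distr) auto
  then show ?thesis
    by (simp add: distr_lborel_vec_of_triple distr_lborel_orthogonal_transformation[OF \<open>orthogonal_transformation U\<close>])
qed

lemma fubini_frame_map:
  fixes h :: "real^3 \<Rightarrow> complex"
  assumes frame: "orthonormal_frame u v w" and h: "integrable lborel h"
  shows "integrable lborel (\<lambda>\<alpha>. LINT st|lborel. h (frame_map u v w (\<alpha>, st)))"
    and "(LINT y|lborel. h y) = (LINT \<alpha>|lborel. LINT st|lborel. h (frame_map u v w (\<alpha>, st)))"
proof -
  have [measurable]: "h \<in> borel_measurable borel"
    using h by auto
  have "integrable (lborel \<Otimes>\<^sub>M lborel) (\<lambda>p. h (frame_map u v w p))"
    using h integrable_distr_eq[of "frame_map u v w" lborel borel h]
    by (simp add: distr_lborel_frame_map[OF frame] lborel_prod)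
  note pair = lborel_pair.integrable_fst'[OF this] lborel_pair.integral_fst'[OF this]
  show "integrable lborel (\<lambda>\<alpha>. LINT st|lborel. h (frame_map u v w (\<alpha>, st)))"
    using pair(1) by simp
  have "(LINT y|lborel. h y) = integral\<^sup>L (distr lborel borel (frame_map u v w)) h"
    by (simp add: distr_lborel_frame_map[OF frame])
  also have "\<dots> = integral\<^sup>L (lborel \<Otimes>\<^sub>M lborel) (\<lambda>p. h (frame_map u v w p))"
    by (simp add: integral_distr lborel_prod)
  also have "\<dots> = (LINT \<alpha>|lborel. LINT st|lborel. h (frame_map u v w (\<alpha>, st)))"
    using pair(2) by simp
  finally show "(LINT y|lborel. h y) = (LINT \<alpha>|lborel. LINT st|lborel. h (frame_map u v w (\<alpha>, st)))" .
qed

lemma AE_frame_map: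
  assumes "orthonormal_frame u v w" and "AE y in lborel. Q y" and "{y. Q y} \<in> sets borel"
  shows "AE \<alpha> in lborel. AE st in lborel. Q (frame_map u v w (\<alpha>, st))"
proof -
  have "AE y in distr lborel borel (frame_map u v w). Q y"
    unfolding distr_lborel_frame_map[OF assms(1)] by (rule assms(2))
  then have "AE p in lborel. Q (frame_map u v w p)"
    using assms(3) by (subst (asm) AE_distr_iff) auto
  then have "AE p in lborel \<Otimes>\<^sub>M lborel. Q (frame_map u v w p)"
    unfolding lborel_prod .
  then show ?thesis
    by (rule lborel_pair.AE_pair)
qed

section \<open>Sources, their essential support and their strips\<close>

lemma AE_zero_outside_esssupp:
  assumes [measurable]: "J \<in> borel_measurable lborel"
  shows "AE y in lborel. y \<notin> esssupp J \<longrightarrow> J y = 0"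
proof -
  define F where "F = {ball x e | x e. 0 < e \<and> emeasure lborel {y \<in> ball x e. J y \<noteq> 0} = 0}"
  obtain F' where F': "F' \<subseteq> F" "countable F'" "\<Union>F' = \<Union>F"
    using Lindelof[of F] by (auto simp: F_def)
  have cover: "- esssupp J \<subseteq> \<Union>F"
  proof
    fix x assume "x \<in> - esssupp J"
    then obtain e where "0 < e" "emeasure lborel {y \<in> ball x e. J y \<noteq> 0} = 0"
      unfolding esssupp_def by auto
    then show "x \<in> \<Union>F"
      unfolding F_def using centre_in_ball by blast
  qed
  have "{y \<in> B. J y \<noteq> 0} \<in> null_sets lborel" if "B \<in> F'" for B
  proof -
    obtain x e where "B = ball x e" "emeasure lborel {y \<in> ball x e. J y \<noteq> 0} = 0"
      using \<open>B \<in> F'\<close> F'(1) unfolding F_def by blast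
    moreover have "{y \<in> ball x e. J y \<noteq> 0} \<in> sets lborel"
      by measurable
    ultimately show ?thesis
      by (auto intro: null_setsI)
  qed
  then have "(\<Union>B\<in>F'. {y \<in> B. J y \<noteq> 0}) \<in> null_sets lborel"
    by (rule null_sets_UN'[OF F'(2)])
  then show ?thesis
    by (rule AE_I') (use cover F'(3) in blast)
qed

lemma esssupp_eq_empty_if_subset_null:
  assumes J [measurable]: "J \<in> borel_measurable lborel"
    and "esssupp J \<subseteq> N" and "N \<in> null_sets lborel"
  shows "esssupp J = {}"
proof (rule ccontr)
  assume "esssupp J \<noteq> {}"
  then obtain x where x: "x \<in> esssupp J"
    by blast
  have "AE y in lborel. y \<notin> {y \<in> ball x 1. J y \<noteq> 0}"
    using AE_zero_outside_esssupp[OF J] AE_not_in[OF \<open>N \<in> null_sets lborel\<close>]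
    by eventually_elim (use \<open>esssupp J \<subseteq> N\<close> in auto)
  moreover have "{y \<in> ball x 1. J y \<noteq> 0} \<in> sets lborel"
    by measurable
  ultimately have "{y \<in> ball x 1. J y \<noteq> 0} \<in> null_sets lborel"
    by (simp add: AE_iff_null_sets)
  then have "emeasure lborel {y \<in> ball x 1. J y \<noteq> 0} = 0"
    by auto
  with x show False
    unfolding esssupp_def by auto
qed

lemma integrable_source:
  assumes "source J"
  shows "integrable lborel J"
proof -
  have J [measurable]: "J \<in> borel_measurable lborel"
    and "compact (esssupp J)"
    and "\<exists>C. AE y in lborel. norm (J y) \<le> C"
    using assms unfolding source_def by auto
  then obtain C where C: "AE y in lborel. norm (J y) \<le> C"
    by blast
  have "esssupp J \<in> sets lborel"
    using \<open>compact (esssupp J)\<close> by (simp add: compact_imp_closed)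
  then have "integrable lborel (\<lambda>y. C * indicator (esssupp J) y :: real)"
    using emeasure_compact_finite[OF \<open>compact (esssupp J)\<close>]
    by (intro integrable_mult_right integrable_real_indicator) auto
  then show ?thesis
  proof (rule Bochner_Integration.integrable_bound)
    show "AE y in lborel. norm (J y) \<le> norm (C * indicator (esssupp J) y :: real)"
      using C AE_zero_outside_esssupp[OF J] by eventually_elim (auto simp: indicator_def)
  qed simp
qed

lemma norm_vector_scalar_mult: "norm (c *s (v :: complex^'n)) = norm c * norm v"
  by (simp add: norm_vec_def L2_set_def norm_mult power_mult_distrib sum_distrib_left[symmetric]
      real_sqrt_mult)

lemma vector_scalar_mult_measurable [measurable]:
  fixes c :: "'a \<Rightarrow> complex" and J :: "'a \<Rightarrow> complex^'n"
  assumes [measurable]: "c \<in> borel_measurable M" "J \<in> borel_measurable M"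
  shows "(\<lambda>y. c y *s J y) \<in> borel_measurable M"
proof (rule borel_measurable_continuous_Pair[where H="\<lambda>a v. a *s v"])
  show "continuous_on UNIV (\<lambda>x. fst x *s snd x :: complex^'n)"
    unfolding vector_scalar_mult_def by (intro continuous_intros)
qed simp_all

lemma integrable_vector_scalar_mult:
  fixes c :: "'a \<Rightarrow> complex" and J :: "'a \<Rightarrow> complex^'n"
  assumes "integrable M J" and "c \<in> borel_measurable M" and "\<And>y. norm (c y) \<le> 1"
  shows "integrable M (\<lambda>y. c y *s J y)"
  using assms(1)
proof (rule Bochner_Integration.integrable_bound)
  show "(\<lambda>y. c y *s J y) \<in> borel_measurable M"
    using assms by measurable
  show "AE y in M. norm (c y *s J y) \<le> norm (J y)"
    using assms(3) by (auto simp: norm_vector_scalar_mult intro!: mult_left_le_one_le)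
qed

lemma cdot_add: "cdot m (v + w) = cdot m v + cdot m w"
  by (simp add: cdot_def sum.distrib algebra_simps)

lemma cdot_diff: "cdot m (v - w) = cdot m v - cdot m w"
  by (simp add: cdot_def sum_subtractf algebra_simps)

lemma cdot_scale: "cdot m (c *s v) = c * cdot m v"
  by (simp add: cdot_def sum_distrib_left algebra_simps)

lemma cdot_cvec: "cdot m (cvec a) = of_real (m \<bullet> a)"
  by (simp add: cdot_def cvec_def inner_vec_def)

lemma bounded_linear_cdot: "bounded_linear (cdot m)"
  unfolding cdot_def
  by (intro bounded_linear_sum bounded_linear_compose[OF bounded_linear_mult_right bounded_linear_vec_nth])

definition strip_offsets :: "real^3 \<Rightarrow> (real^3 \<Rightarrow> complex^3) \<Rightarrow> real set" where
  "strip_offsets x0 J = {\<alpha>. plane x0 \<alpha> \<subseteq> strip x0 J}"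

lemma mem_strip_iff_offset: "y \<in> strip x0 J \<longleftrightarrow> - (y \<bullet> x0) \<in> strip_offsets x0 J"
  by (auto simp: strip_offsets_def strip_def plane_def)

lemma offset_mem_strip_offsets:
  assumes "z \<in> esssupp J"
  shows "- (z \<bullet> x0) \<in> strip_offsets x0 J"
  using assms INF_lower[OF assms, of "\<lambda>z. ereal (z \<bullet> x0)"] SUP_upper[OF assms, of "\<lambda>z. ereal (z \<bullet> x0)"]
  by (auto simp: strip_offsets_def strip_def plane_def)

lemma scaleR_mem_plane: "x0 \<bullet> x0 = 1 \<Longrightarrow> (- \<alpha>) *\<^sub>R x0 \<in> plane x0 \<alpha>"
  by (simp add: plane_def)

lemma esssupp_not_subset_hyperplane:
  assumes "J \<in> borel_measurable lborel" and "esssupp J \<noteq> {}" and "x0 \<noteq> 0"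
  shows "\<not> esssupp J \<subseteq> {y. x0 \<bullet> y = c}"
proof
  assume "esssupp J \<subseteq> {y. x0 \<bullet> y = c}"
  moreover have "{y. x0 \<bullet> y = c} \<in> null_sets lborel"
    using negligible_hyperplane[of x0 c] \<open>x0 \<noteq> 0\<close>
    by (auto simp: negligible_iff_null_sets null_sets_completion_iff)
  ultimately show False
    using esssupp_eq_empty_if_subset_null[OF assms(1)] \<open>esssupp J \<noteq> {}\<close> by blast
qed

lemma strip_offsets_eq_interval:
  assumes "x0 \<bullet> x0 = 1" and "compact (esssupp J)" and "esssupp J \<noteq> {}"
  obtains zmin zmax where "zmin \<in> esssupp J" and "zmax \<in> esssupp J"
    and "\<And>z. z \<in> esssupp J \<Longrightarrow> zmin \<bullet> x0 \<le> z \<bullet> x0 \<and> z \<bullet> x0 \<le> zmax \<bullet> x0"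
    and "strip_offsets x0 J = {- (zmax \<bullet> x0) .. - (zmin \<bullet> x0)}"
proof -
  have "continuous_on (esssupp J) (\<lambda>z. z \<bullet> x0)"
    by (intro continuous_intros)
  then obtain zmin zmax where "zmin \<in> esssupp J" "zmax \<in> esssupp J"
    and min: "\<And>z. z \<in> esssupp J \<Longrightarrow> zmin \<bullet> x0 \<le> z \<bullet> x0"
    and max: "\<And>z. z \<in> esssupp J \<Longrightarrow> z \<bullet> x0 \<le> zmax \<bullet> x0"
    using continuous_attains_inf[OF assms(2,3)] continuous_attains_sup[OF assms(2,3)] by metis
  have "(INF z\<in>esssupp J. ereal (z \<bullet> x0)) = ereal (zmin \<bullet> x0)"
    by (rule cInf_eq_minimum) (use \<open>zmin \<in> esssupp J\<close> min in auto)
  moreover have "(SUP z\<in>esssupp J. ereal (z \<bullet> x0)) = ereal (zmax \<bullet> x0)"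
    by (rule cSup_eq_maximum) (use \<open>zmax \<in> esssupp J\<close> max in auto)
  ultimately have strip: "y \<in> strip x0 J \<longleftrightarrow> zmin \<bullet> x0 \<le> y \<bullet> x0 \<and> y \<bullet> x0 \<le> zmax \<bullet> x0" for y
    by (simp add: strip_def)
  have "strip_offsets x0 J = {- (zmax \<bullet> x0) .. - (zmin \<bullet> x0)}"
  proof (intro set_eqI iffI)
    fix \<alpha> assume "\<alpha> \<in> strip_offsets x0 J"
    then have "(- \<alpha>) *\<^sub>R x0 \<in> strip x0 J"
      using scaleR_mem_plane[OF assms(1)] by (auto simp: strip_offsets_def)
    then show "\<alpha> \<in> {- (zmax \<bullet> x0) .. - (zmin \<bullet> x0)}"
      using assms(1) by (simp add: strip)
  qed (auto simp: strip_offsets_def plane_def strip)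
  then show ?thesis
    using that \<open>zmin \<in> esssupp J\<close> \<open>zmax \<in> esssupp J\<close> min max by blast
qed

lemma strip_offsets_cases:
  assumes "x0 \<bullet> x0 = 1" and "source J"
  obtains "strip_offsets x0 J = {}" | c d where "c < d" and "strip_offsets x0 J = {c..d}"
proof (cases "esssupp J = {}")
  case True
  then have "strip x0 J = {}"
    by (simp add: strip_def top_ereal_def bot_ereal_def)
  then have "strip_offsets x0 J = {}"
    using scaleR_mem_plane[OF assms(1)] unfolding strip_offsets_def by blast
  then show ?thesis ..
next
  case False
  have J: "J \<in> borel_measurable lborel" and "compact (esssupp J)"
    using \<open>source J\<close> by (auto simp: source_def)
  then obtain zmin zmax where "zmin \<in> esssupp J"
    and bounds: "\<And>z. z \<in> esssupp J \<Longrightarrow> zmin \<bullet> x0 \<le> z \<bullet> x0 \<and> z \<bullet> x0 \<le> zmax \<bullet> x0"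
    and offsets: "strip_offsets x0 J = {- (zmax \<bullet> x0) .. - (zmin \<bullet> x0)}"
    using strip_offsets_eq_interval[OF assms(1) _ False] by metis
  have "x0 \<noteq> 0"
    using assms(1) by auto
  have "zmin \<bullet> x0 < zmax \<bullet> x0"
  proof (rule ccontr)
    assume "\<not> zmin \<bullet> x0 < zmax \<bullet> x0"
    then have "esssupp J \<subseteq> {y. x0 \<bullet> y = zmin \<bullet> x0}"
      using bounds by (fastforce simp: inner_commute)
    then show False
      using esssupp_not_subset_hyperplane[OF J False \<open>x0 \<noteq> 0\<close>] by blast
  qed
  then show ?thesis
    using that(2) offsets by simp
qed

section \<open>Plane integrals of a source\<close>

lemma Jhat_eq_integral_frame_map:
  "Jhat x0 l m J \<alpha> = (LINT st|lborel. cdot m (J (frame_map x0 l m (\<alpha>, st))))"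
  by (simp add: Jhat_def frame_map_def)

lemma integrable_Jhat:
  assumes "orthonormal_frame x0 l m" and "source J"
  shows "integrable lborel (Jhat x0 l m J)"
  unfolding Jhat_eq_integral_frame_map
  by (rule fubini_frame_map(1)[OF assms(1) integrable_bounded_linear[OF bounded_linear_cdot
        integrable_source[OF assms(2)]]])

text \<open>Integrating first over the planes orthogonal to \<open>x0\<close>, on which the plane wave is constant.\<close>
lemma cdot_plane_wave_integral:
  assumes frame: "orthonormal_frame x0 l m" and "source J"
  shows "cdot m (LINT y|lborel. exp (- \<i> * of_real (k * (x0 \<bullet> y))) *s J y)
    = fourier_transform (Jhat x0 l m J) k"
proof -
  define e where "e y = exp (- \<i> * of_real (k * (x0 \<bullet> y)))" for y
  have [measurable]: "e \<in> borel_measurable lborel"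
    unfolding e_def by measurable
  have J: "integrable lborel J"
    by (rule integrable_source[OF \<open>source J\<close>])
  have "integrable lborel (\<lambda>y. cdot m (e y *s J y))"
    using J by (intro integrable_bounded_linear[OF bounded_linear_cdot] integrable_vector_scalar_mult)
      (auto simp: e_def)
  moreover have "e (frame_map x0 l m (\<alpha>, st)) = iexp (k * \<alpha>)" for \<alpha> st
    using inner_frame_map[OF frame, of "(\<alpha>, st)"] by (simp add: e_def inner_commute)
  ultimately have "(LINT y|lborel. cdot m (e y *s J y)) = (LINT \<alpha>|lborel. iexp (k * \<alpha>) * Jhat x0 l m J \<alpha>)"
    by (simp add: fubini_frame_map(2)[OF frame] Jhat_eq_integral_frame_map cdot_scale)
  moreover have "cdot m (LINT y|lborel. e y *s J y) = (LINT y|lborel. cdot m (e y *s J y))"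
    using J
    by (intro integral_bounded_linear[OF bounded_linear_cdot, symmetric] integrable_vector_scalar_mult)
      (auto simp: e_def)
  ultimately show ?thesis
    by (simp add: e_def fourier_transform_def)
qed

lemma Jhat_AE_zero_outside_strip_offsets:
  assumes frame: "orthonormal_frame x0 l m" and "source J"
  shows "AE \<alpha> in lborel. \<alpha> \<notin> strip_offsets x0 J \<longrightarrow> Jhat x0 l m J \<alpha> = 0"
proof -
  have J [measurable]: "J \<in> borel_measurable lborel" and "compact (esssupp J)"
    using \<open>source J\<close> by (auto simp: source_def)
  have "esssupp J \<in> sets borel"
    using \<open>compact (esssupp J)\<close> by (simp add: compact_imp_closed)
  then have "{y. y \<notin> esssupp J \<longrightarrow> J y = 0} \<in> sets borel"
    by measurable
  then have "AE \<alpha> in lborel. AE st in lborel. frame_map x0 l m (\<alpha>, st) \<notin> esssupp J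
      \<longrightarrow> J (frame_map x0 l m (\<alpha>, st)) = 0"
    by (rule AE_frame_map[OF frame AE_zero_outside_esssupp[OF J]])
  then show ?thesis
  proof eventually_elim
    case (elim \<alpha>)
    show ?case
    proof
      assume "\<alpha> \<notin> strip_offsets x0 J"
      then have outside: "frame_map x0 l m (\<alpha>, st) \<notin> esssupp J" for st
        using offset_mem_strip_offsets[of "frame_map x0 l m (\<alpha>, st)" J x0]
        by (auto simp: inner_frame_map[OF frame])
      have "AE st in lborel. cdot m (J (frame_map x0 l m (\<alpha>, st))) = 0"
        using elim by eventually_elim (simp add: outside cdot_def)
      then show "Jhat x0 l m J \<alpha> = 0"
        unfolding Jhat_eq_integral_frame_map by (rule integral_eq_zero_AE)
    qed
  qed
qed

text \<open>Compact support makes the Fourier transform of the difference entire, so it vanishes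
  everywhere once it vanishes on an interval.\<close>
lemma Jhat_AE_eq_if_fourier_eq_on_interval:
  assumes frame: "orthonormal_frame x0 l m" and J1: "source J1" and J2: "source J2"
    and "a < b"
    and F: "\<And>k. a < k \<Longrightarrow> k < b
      \<Longrightarrow> fourier_transform (Jhat x0 l m J1) k = fourier_transform (Jhat x0 l m J2) k"
  shows "AE \<alpha> in lborel. Jhat x0 l m J1 \<alpha> = Jhat x0 l m J2 \<alpha>"
proof -
  define w where "w \<alpha> = Jhat x0 l m J1 \<alpha> - Jhat x0 l m J2 \<alpha>" for \<alpha>
  have int: "integrable lborel (Jhat x0 l m J1)" "integrable lborel (Jhat x0 l m J2)"
    using integrable_Jhat[OF frame] J1 J2 by auto
  then have "integrable lborel w"
    by (simp add: w_def[abs_def])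
  moreover have "AE \<alpha> in lborel. \<alpha> \<notin> strip_offsets x0 J1 \<union> strip_offsets x0 J2 \<longrightarrow> w \<alpha> = 0"
    using Jhat_AE_zero_outside_strip_offsets[OF frame J1] Jhat_AE_zero_outside_strip_offsets[OF frame J2]
    by eventually_elim (simp add: w_def)
  moreover have "bounded (strip_offsets x0 J1 \<union> strip_offsets x0 J2)"
    using orthonormal_frameD(1)[OF frame]
    by (metis bounded_Un bounded_closed_interval bounded_empty strip_offsets_cases J1 J2)
  moreover have "fourier_transform w k = 0" if "a < k" "k < b" for k
    using F[OF that] fourier_transform_diff[OF int] by (simp add: w_def[abs_def])
  ultimately have "fourier_transform w t = 0" for t
    using fourier_transform_eq_zero_if_zero_on_interval \<open>a < b\<close> by blast
  then have "AE \<alpha> in lborel. w \<alpha> = 0"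
    by (rule fourier_transform_zero_imp_AE_zero[OF \<open>integrable lborel w\<close>])
  then show ?thesis
    by eventually_elim (simp add: w_def)
qed

lemma interval_subset_if_AE_subset:
  fixes B :: "real set"
  assumes "closed B" and "AE x in lebesgue. x \<in> {c..d} \<longrightarrow> x \<in> B" and "c < d"
  shows "{c..d} \<subseteq> B"
proof -
  have "{c<..<d} \<subseteq> B"
  proof
    fix x assume "x \<in> {c<..<d}"
    moreover have "AE x \<in> {c<..<d} in lebesgue. x \<in> B"
      using assms(2) by eventually_elim auto
    ultimately show "x \<in> B"
      by (rule mem_closed_if_AE_lebesgue_open[OF open_greaterThanLessThan \<open>closed B\<close>, rotated])
  qed
  then have "closure {c<..<d} \<subseteq> B"
    using \<open>closed B\<close> by (rule closure_minimal)
  then show ?thesis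
    using \<open>c < d\<close> by simp
qed

lemma interval_eq_if_AE_eq:
  fixes B1 B2 :: "real set"
  assumes B1: "B1 = {} \<or> (\<exists>c d. c < d \<and> B1 = {c..d})"
    and B2: "B2 = {} \<or> (\<exists>c d. c < d \<and> B2 = {c..d})"
    and "AE x in lebesgue. x \<in> B1 \<longleftrightarrow> x \<in> B2"
  shows "B1 = B2"
proof -
  have "closed B1" "closed B2"
    using B1 B2 by auto
  have "B \<subseteq> B'"
    if B: "B = {} \<or> (\<exists>c d. c < d \<and> B = {c..d})" and "closed B'" and "AE x in lebesgue. x \<in> B \<longrightarrow> x \<in> B'"
    for B B' :: "real set"
    using B interval_subset_if_AE_subset[OF \<open>closed B'\<close>] that(3) by blast
  moreover have "AE x in lebesgue. x \<in> B1 \<longrightarrow> x \<in> B2" "AE x in lebesgue. x \<in> B2 \<longrightarrow> x \<in> B1"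
    using assms(3) by (auto elim: eventually_mono)
  ultimately show ?thesis
    using B1 B2 \<open>closed B1\<close> \<open>closed B2\<close> by blast
qed

text \<open>Almost everywhere, the strip offsets are exactly where the plane integrals do not vanish.\<close>
lemma strip_eq_if_Jhat_AE_eq:
  assumes frame: "orthonormal_frame x0 l m" and J1: "source J1" and J2: "source J2"
    and null1: "{\<alpha>. \<alpha> \<in> strip_offsets x0 J1 \<and> Jhat x0 l m J1 \<alpha> = 0} \<in> null_sets lebesgue"
    and null2: "{\<alpha>. \<alpha> \<in> strip_offsets x0 J2 \<and> Jhat x0 l m J2 \<alpha> = 0} \<in> null_sets lebesgue"
    and eq: "AE \<alpha> in lborel. Jhat x0 l m J1 \<alpha> = Jhat x0 l m J2 \<alpha>"
  shows "strip x0 J1 = strip x0 J2"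
proof -
  have "AE \<alpha> in lebesgue. \<alpha> \<in> strip_offsets x0 J1 \<longleftrightarrow> \<alpha> \<in> strip_offsets x0 J2"
    using AE_not_in[OF null1] AE_not_in[OF null2] AE_completion[OF eq]
      AE_completion[OF Jhat_AE_zero_outside_strip_offsets[OF frame J1]]
      AE_completion[OF Jhat_AE_zero_outside_strip_offsets[OF frame J2]]
    by eventually_elim auto
  then have "strip_offsets x0 J1 = strip_offsets x0 J2"
    using orthonormal_frameD(1)[OF frame]
    by (intro interval_eq_if_AE_eq) (metis strip_offsets_cases J1 J2)+
  then show ?thesis
    by (auto simp: mem_strip_iff_offset[of _ x0 J1] mem_strip_iff_offset[of _ x0 J2])
qed

section \<open>Phaseless far field data\<close>

lemma orthonormal_frame_cross3:
  fixes x0 q0 :: "real^3"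
  assumes "norm x0 = 1" and "cross3 x0 q0 \<noteq> 0"
  defines "l \<equiv> (1 / norm (cross3 x0 q0)) *\<^sub>R cross3 x0 q0"
  shows "orthonormal_frame x0 l (cross3 x0 l)"
proof -
  have "norm l = 1"
    using assms(2) by (simp add: l_def)
  moreover have "x0 \<bullet> l = 0"
    by (simp add: l_def dot_cross_self)
  moreover have "(norm (cross3 x0 l))\<^sup>2 + (x0 \<bullet> l)\<^sup>2 = (norm x0 * norm l)\<^sup>2"
    by (rule norm_cross_dot)
  ultimately show ?thesis
    using assms(1)
    by (simp add: orthonormal_frame_def dot_cross_self inner_commute dot_square_norm)
qed

lemma cdot_far_field_dip:
  assumes frame: "orthonormal_frame x0 l m" and m: "m = cross3 x0 l" and "source J"
  shows "cdot m (far_field_dip eps mu z0 x0 k J \<tau> l)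
    = \<i> * of_real (k / sqrt (eps * mu) * mu) * fourier_transform (Jhat x0 l m J) k
      + \<tau> * (\<i> * of_real k * exp (- \<i> * of_real (k * (x0 \<bullet> z0))))"
  using orthonormal_frameD[OF frame] cdot_plane_wave_integral[OF frame \<open>source J\<close>, symmetric]
  unfolding far_field_dip_def far_field_def Let_def
  by (simp add: cdot_add cdot_diff cdot_scale cdot_cvec m[symmetric] inner_commute algebra_simps)

lemma fourier_Jhat_eq_if_phaseless_data_eq:
  assumes "eps > 0" and "mu > 0" and "k > 0"
    and frame: "orthonormal_frame x0 l m" and m: "m = cross3 x0 l"
    and J1: "source J1" and J2: "source J2"
    and indep: "\<forall>a b::real. a *\<^sub>R (\<tau>2 - \<tau>1) + b *\<^sub>R (\<tau>3 - \<tau>1) = 0 \<longrightarrow> a = 0 \<and> b = 0"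
    and data: "\<forall>\<tau> \<in> {\<tau>1, \<tau>2, \<tau>3}. cmod (cdot m (far_field_dip eps mu z0 x0 k J1 \<tau> l))
      = cmod (cdot m (far_field_dip eps mu z0 x0 k J2 \<tau> l))"
  shows "fourier_transform (Jhat x0 l m J1) k = fourier_transform (Jhat x0 l m J2) k"
proof -
  define c where "c = \<i> * of_real (k / sqrt (eps * mu) * mu)"
  have "c * fourier_transform (Jhat x0 l m J1) k = c * fourier_transform (Jhat x0 l m J2) k"
    using indep data
    by (intro eq_if_cmod_shifts_eq[where B="\<i> * of_real k * exp (- \<i> * of_real (k * (x0 \<bullet> z0)))"])
      (use \<open>k > 0\<close> in \<open>auto simp: c_def cdot_far_field_dip[OF frame m J1] cdot_far_field_dip[OF frame m J2]\<close>)
  moreover have "c \<noteq> 0"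
    using assms(1-3) by (simp add: c_def)
  ultimately show ?thesis
    by simp
qed

theorem theorem4p2:
  fixes eps mu kmin kmax :: real
    and z0 x0 q0 l m :: "real^3"
    and \<tau>1 \<tau>2 \<tau>3 :: complex
    and J1 J2 :: "real^3 \<Rightarrow> complex^3"
  assumes "eps > 0" and "mu > 0"
    and "0 < kmin" and "kmin < kmax"
    and "\<tau>1 \<noteq> \<tau>2" and "\<tau>1 \<noteq> \<tau>3" and "\<tau>2 \<noteq> \<tau>3"
    and "\<forall>a b::real. a *\<^sub>R (\<tau>2 - \<tau>1) + b *\<^sub>R (\<tau>3 - \<tau>1) = 0 \<longrightarrow> a = 0 \<and> b = 0"
    and "norm x0 = 1" and "norm q0 = 1" and "cross3 x0 q0 \<noteq> 0"
    and "l = (1 / norm (cross3 x0 q0)) *\<^sub>R cross3 x0 q0"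
    and "m = cross3 x0 l"
    and "source J1" and "source J2"
    and "{\<alpha>. plane x0 \<alpha> \<subseteq> strip x0 J1 \<and> Jhat x0 l m J1 \<alpha> = 0} \<in> null_sets lebesgue"
    and "{\<alpha>. plane x0 \<alpha> \<subseteq> strip x0 J2 \<and> Jhat x0 l m J2 \<alpha> = 0} \<in> null_sets lebesgue"
    and "\<forall>k \<in> {kmin<..<kmax}. \<forall>\<tau> \<in> {\<tau>1, \<tau>2, \<tau>3}.
           cmod (cdot m (far_field_dip eps mu z0 x0 k J1 \<tau> l))
         = cmod (cdot m (far_field_dip eps mu z0 x0 k J2 \<tau> l))"
  shows "strip x0 J1 = strip x0 J2"
proof -
  have frame: "orthonormal_frame x0 l m"
    using orthonormal_frame_cross3[OF assms(9,11)] by (simp add: assms(12,13))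
  have "fourier_transform (Jhat x0 l m J1) k = fourier_transform (Jhat x0 l m J2) k"
    if "kmin < k" "k < kmax" for k
    by (rule fourier_Jhat_eq_if_phaseless_data_eq[OF assms(1,2) _ frame assms(13-15,8)])
      (use assms(3,18) that in auto)
  then have "AE \<alpha> in lborel. Jhat x0 l m J1 \<alpha> = Jhat x0 l m J2 \<alpha>"
    by (rule Jhat_AE_eq_if_fourier_eq_on_interval[OF frame assms(14,15,4)])
  then show ?thesis
    using assms(16,17)
    by (intro strip_eq_if_Jhat_AE_eq[OF frame assms(14,15)]) (simp_all add: strip_offsets_def)
qed

end
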